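(* Let $D$ be a strongly connected digraph with $n$ vertices and exactly three complementarity eigenvalues. If $D$ contains a subdigraph isomorphic to the $\theta$-digraph $\theta(a,b,c)$, then $n=a+b+c+2$.
   Context: All digraphs are finite, without loops and without multiple arcs. For a digraph $D$ with adjacency matrix $A$ (on $n$ vertices), a real $\lambda$ is a complementarity eigenvalue if there is a nonzero $x\in\mathbb{R}^n$, $x\ge0$, with $Ax-\lambda x\ge 0$ and $\langle x,Ax-\lambda x\rangle=0$. Subdigraphs need not be induced. The $\theta$-digraph $\theta(a,b,c)$ (integers $a,b,c\ge0$, $a\le b$, $b>0$) consists of two distinct vertices $v,w$ and three internally vertex-disjoint directed paths: two from $w$ to $v$ having $a+2$ and $b+2$ vertices, and one from $v$ to $w$ having $c+2$ vertices. *)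

theory Defs
  imports "HOL-Analysis.Analysis"
begin

text \<open>A digraph on the finite vertex type 'n is given by its arc set E; it is loopless
  when E is irreflexive. (No multiple arcs is automatic for a set of pairs.)\<close>

definition loopless :: "('n \<times> 'n) set \<Rightarrow> bool" where
  "loopless E \<longleftrightarrow> (\<forall>v. (v, v) \<notin> E)"

definition strongly_connected :: "('n \<times> 'n) set \<Rightarrow> bool" where
  "strongly_connected E \<longleftrightarrow> (\<forall>u v. (u, v) \<in> E\<^sup>*)"

definition adjacency_matrix :: "('n::finite \<times> 'n) set \<Rightarrow> real^'n^'n" where
  "adjacency_matrix E = (\<chi> i j. if (i, j) \<in> E then 1 else 0)"

definition complementarity_eigenvalue :: "real^'n^'n \<Rightarrow> real \<Rightarrow> bool" where
  "complementarity_eigenvalue A lam \<longleftrightarrow>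
     (\<exists>x :: real^'n. x \<noteq> 0 \<and> (\<forall>i. x $ i \<ge> 0) \<and>
        (\<forall>i. (A *v x - lam *\<^sub>R x) $ i \<ge> 0) \<and> x \<bullet> (A *v x - lam *\<^sub>R x) = 0)"

text \<open>The theta digraph theta(a,b,c) on vertices {0..<a+b+c+2}: vertex 0 is v, vertex 1 is w;
  two directed paths from w to v with internal vertices [2..<a+2] resp. [a+2..<a+b+2],
  and one directed path from v to w with internal vertices [a+b+2..<a+b+c+2].\<close>

fun path_arcs :: "'a list \<Rightarrow> ('a \<times> 'a) set" where
  "path_arcs (x # y # zs) = insert (x, y) (path_arcs (y # zs))"
| "path_arcs _ = {}"

definition theta_vertices :: "nat \<Rightarrow> nat \<Rightarrow> nat \<Rightarrow> nat set" where
  "theta_vertices a b c = {0..<a+b+c+2}"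

definition theta_arcs :: "nat \<Rightarrow> nat \<Rightarrow> nat \<Rightarrow> (nat \<times> nat) set" where
  "theta_arcs a b c =
     path_arcs ([1] @ [2..<a+2] @ [0]) \<union>
     path_arcs ([1] @ [a+2..<a+b+2] @ [0]) \<union>
     path_arcs ([0] @ [a+b+2..<a+b+c+2] @ [1])"

definition contains_theta :: "('n \<times> 'n) set \<Rightarrow> nat \<Rightarrow> nat \<Rightarrow> nat \<Rightarrow> bool" where
  "contains_theta E a b c \<longleftrightarrow>
     (\<exists>f :: nat \<Rightarrow> 'n. inj_on f (theta_vertices a b c) \<and>
        (\<forall>(x, y) \<in> theta_arcs a b c. (f x, f y) \<in> E))"

end

theory Submission
  imports Defs
begin

text \<open>Every nonempty strongly connected vertex set \<open>U\<close> carries a complementarity eigenvalue,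
  the Perron root of the subdigraph induced on \<open>U\<close>: a positive Perron vector on \<open>U\<close>, extended
  by zero, is a complementarity eigenvector. The Perron root strictly increases along proper
  inclusions of such sets. If the theta subdigraph missed a vertex, then a vertex \<open>v\<close>, a cycle
  through \<open>v\<close>, the vertex set of the theta subdigraph and the whole vertex set would form a
  strictly increasing chain of four strongly connected sets, and hence give four distinct
  complementarity eigenvalues.\<close>

definition strongly_connected_on :: "('n \<times> 'n) set \<Rightarrow> 'n set \<Rightarrow> bool" where
  "strongly_connected_on E U \<longleftrightarrow> (\<forall>u\<in>U. \<forall>v\<in>U. (u, v) \<in> (Restr E U)\<^sup>*)"

definition positive_eigenvector_on ::
    "('n::finite \<times> 'n) set \<Rightarrow> 'n set \<Rightarrow> real \<Rightarrow> real^'n \<Rightarrow> bool" where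
  "positive_eigenvector_on E U lam y \<longleftrightarrow>
     (\<forall>i\<in>U. 0 < y $ i) \<and> (\<forall>i. i \<notin> U \<longrightarrow> y $ i = 0) \<and>
     (\<forall>i\<in>U. (adjacency_matrix E *v y) $ i = lam * y $ i)"

text \<open>The spectral radius of the subdigraph induced on \<open>U\<close>. Meaningful only for nonempty strongly
  connected \<open>U\<close>; otherwise an arbitrary real.\<close>

definition perron_root :: "('n::finite \<times> 'n) set \<Rightarrow> 'n set \<Rightarrow> real" where
  "perron_root E U = (SOME lam. \<exists>y. positive_eigenvector_on E U lam y)"

definition simplex_on :: "'n set \<Rightarrow> (real^'n::finite) set" where
  "simplex_on U = {y. (\<forall>i. 0 \<le> y $ i) \<and> (\<forall>i. i \<notin> U \<longrightarrow> y $ i = 0) \<and> (\<Sum>i\<in>UNIV. y $ i) = 1}"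

subsection \<open>Adjacency matrices acting on nonnegative vectors\<close>

lemma adjacency_matrix_mult_nth:
  "(adjacency_matrix E *v x) $ i = (\<Sum>j | (i, j) \<in> E. x $ j)"
proof -
  have "(adjacency_matrix E *v x) $ i = (\<Sum>j\<in>UNIV. if (i, j) \<in> E then x $ j else 0)"
    unfolding adjacency_matrix_def matrix_vector_mult_def by (auto intro: sum.cong)
  also have "\<dots> = (\<Sum>j | (i, j) \<in> E. x $ j)"
    by (simp add: sum.If_cases Int_def)
  finally show ?thesis .
qed

lemma adjacency_matrix_mult_nonneg:
  "(\<And>j. 0 \<le> x $ j) \<Longrightarrow> 0 \<le> (adjacency_matrix E *v x) $ i"
  by (simp add: adjacency_matrix_mult_nth sum_nonneg)

lemma adjacency_matrix_mult_ge_arc: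
  assumes "\<And>j. 0 \<le> x $ j" and "(i, j) \<in> E"
  shows "x $ j \<le> (adjacency_matrix E *v x) $ i"
  unfolding adjacency_matrix_mult_nth using assms by (intro member_le_sum) auto

lemma complementarity_eigenvalue_if_positive_eigenvector_on:
  assumes y: "positive_eigenvector_on E U lam y" and "U \<noteq> {}"
  shows "complementarity_eigenvalue (adjacency_matrix E) lam"
  unfolding complementarity_eigenvalue_def
proof (intro exI conjI allI)
  have nonneg: "0 \<le> y $ i" for i
    using y by (cases "i \<in> U") (auto simp: positive_eigenvector_on_def less_imp_le)
  then show "0 \<le> y $ i" for i .
  obtain u where "u \<in> U" using \<open>U \<noteq> {}\<close> by blast
  then show "y \<noteq> 0" using y by (auto simp: positive_eigenvector_on_def)
  show "0 \<le> (adjacency_matrix E *v y - lam *\<^sub>R y) $ i" for i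
    using y adjacency_matrix_mult_nonneg[OF nonneg, of E i]
    by (cases "i \<in> U") (auto simp: positive_eigenvector_on_def)
  have "y $ i * (adjacency_matrix E *v y - lam *\<^sub>R y) $ i = 0" for i
    using y by (cases "i \<in> U") (auto simp: positive_eigenvector_on_def)
  then show "y \<bullet> (adjacency_matrix E *v y - lam *\<^sub>R y) = 0"
    unfolding inner_vec_def by (simp add: sum.neutral)
qed

lemma strongly_connected_on_vanishing:
  assumes nonneg: "\<And>j. 0 \<le> z $ j" and sc: "strongly_connected_on E U"
    and subharmonic: "\<And>i. i \<in> U \<Longrightarrow> z $ i = 0 \<Longrightarrow> (adjacency_matrix E *v z) $ i \<le> 0"
    and "i \<in> U" "z $ i = 0" "j \<in> U"
  shows "z $ j = 0"
proof -
  have "(i, j) \<in> (Restr E U)\<^sup>*"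
    using sc \<open>i \<in> U\<close> \<open>j \<in> U\<close> by (simp add: strongly_connected_on_def)
  then show ?thesis
  proof (induction rule: rtrancl_induct)
    case base
    show ?case using \<open>z $ i = 0\<close> .
  next
    case (step u v)
    then have "(u, v) \<in> E" "u \<in> U" by auto
    have "z $ v \<le> (adjacency_matrix E *v z) $ u"
      using adjacency_matrix_mult_ge_arc[OF nonneg \<open>(u, v) \<in> E\<close>] .
    also have "\<dots> \<le> 0" using subharmonic[OF \<open>u \<in> U\<close> step.IH] .
    finally show ?case using nonneg[of v] by simp
  qed
qed

subsection \<open>Perron vectors of strongly connected induced subdigraphs\<close>

lemma compact_simplex_on: "compact (simplex_on U)"
proof (rule compact_eq_bounded_closed[THEN iffD2], rule conjI)
  have "y $ i \<le> 1" if "y \<in> simplex_on U" for y i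
  proof -
    have "y $ i \<le> (\<Sum>j\<in>UNIV. y $ j)"
      using that by (intro member_le_sum) (auto simp: simplex_on_def)
    then show ?thesis using that by (simp add: simplex_on_def)
  qed
  then have "simplex_on U \<subseteq> cbox 0 1"
    by (auto simp: mem_box_cart simplex_on_def)
  then show "bounded (simplex_on U)"
    using bounded_cbox bounded_subset by blast
  have "simplex_on U = {y. \<forall>i. 0 \<le> y $ i} \<inter> (\<Inter>i\<in>- U. {y. y $ i = 0}) \<inter> {y. (\<Sum>i\<in>UNIV. y $ i) = 1}"
    by (auto simp: simplex_on_def)
  also have "closed \<dots>"
    by (intro closed_Int closed_INT closed_positive_orthant closed_Collect_eq continuous_intros)
      (auto intro!: closed_Collect_eq continuous_intros)
  finally show "closed (simplex_on U)" .
qed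

lemma convex_simplex_on: "convex (simplex_on U)"
  unfolding convex_def simplex_on_def
  by (auto simp: sum.distrib simp flip: sum_distrib_left)

lemma nonneg_eigenvector_on_exists:
  fixes E :: "('n::finite \<times> 'n) set"
  assumes "U \<noteq> {}"
  obtains y :: "real^'n" and lam where "y \<in> simplex_on U"
    and "\<And>i. i \<in> U \<Longrightarrow> (adjacency_matrix E *v y) $ i = lam * y $ i"
proof -
  \<comment> \<open>A Brouwer fixed point of \<open>y \<mapsto> F y / s y\<close> stands in for the Perron--Frobenius theorem.\<close>
  define F :: "real^'n \<Rightarrow> real^'n" where
    "F y = (\<chi> i. if i \<in> U then y $ i + (adjacency_matrix E *v y) $ i else 0)" for y
  define s where "s y = (\<Sum>i\<in>UNIV. F y $ i)" for y
  have F_ge: "y $ i \<le> F y $ i" and F_nonneg: "0 \<le> F y $ i" if "y \<in> simplex_on U" for y i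
    using that adjacency_matrix_mult_nonneg[of y E i]
    by (auto simp: F_def simplex_on_def)
  have s_ge: "1 \<le> s y" if "y \<in> simplex_on U" for y
  proof -
    have "1 = (\<Sum>i\<in>UNIV. y $ i)" using that by (simp add: simplex_on_def)
    also have "\<dots> \<le> s y" unfolding s_def using F_ge[OF that] by (rule sum_mono)
    finally show ?thesis .
  qed
  have contF: "continuous_on (simplex_on U) F"
    unfolding F_def
  proof (rule continuous_on_vec_lambda)
    fix i
    show "continuous_on (simplex_on U)
        (\<lambda>y. if i \<in> U then y $ i + (adjacency_matrix E *v y) $ i else 0)"
      by (cases "i \<in> U") (auto intro!: continuous_intros)
  qed
  have "continuous_on (simplex_on U) (\<lambda>y. (1 / s y) *\<^sub>R F y)"
  proof -
    have "s y \<noteq> 0" if "y \<in> simplex_on U" for y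
      using s_ge[OF that] by simp
    then show ?thesis
      unfolding s_def by (intro continuous_intros contF) auto
  qed
  moreover obtain u where "u \<in> U" using assms by blast
  then have "axis u 1 \<in> simplex_on U"
    by (auto simp: simplex_on_def axis_def)
  moreover have "(\<lambda>y. (1 / s y) *\<^sub>R F y) \<in> simplex_on U \<rightarrow> simplex_on U"
  proof
    fix y assume y: "y \<in> simplex_on U"
    have "(\<Sum>i\<in>UNIV. F y $ i / s y) = 1"
      using s_ge[OF y] by (simp add: s_def flip: sum_divide_distrib)
    then show "(1 / s y) *\<^sub>R F y \<in> simplex_on U"
      using F_nonneg[OF y] s_ge[OF y] by (auto simp: simplex_on_def F_def)
  qed
  ultimately obtain y where y: "y \<in> simplex_on U" "(1 / s y) *\<^sub>R F y = y"
    by (auto intro: brouwer[OF compact_simplex_on convex_simplex_on])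
  show ?thesis
  proof (rule that[OF y(1)])
    fix i assume "i \<in> U"
    have "F y $ i = s y * y $ i"
      using arg_cong[OF y(2), of "\<lambda>v. v $ i"] s_ge[OF y(1)] by (simp add: field_simps)
    then show "(adjacency_matrix E *v y) $ i = (s y - 1) * y $ i"
      using \<open>i \<in> U\<close> by (simp add: F_def algebra_simps)
  qed
qed

lemma positive_eigenvector_on_exists:
  fixes E :: "('n::finite \<times> 'n) set"
  assumes "U \<noteq> {}" and sc: "strongly_connected_on E U"
  shows "\<exists>lam y. positive_eigenvector_on E U lam y"
proof -
  obtain y :: "real^'n" and lam where y: "y \<in> simplex_on U"
    and eig: "\<And>i. i \<in> U \<Longrightarrow> (adjacency_matrix E *v y) $ i = lam * y $ i"
    using nonneg_eigenvector_on_exists[OF \<open>U \<noteq> {}\<close>] by blast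
  have nonneg: "0 \<le> y $ i" for i
    using y by (simp add: simplex_on_def)
  have "0 < y $ i" if "i \<in> U" for i
  proof (rule ccontr)
    assume "\<not> 0 < y $ i"
    then have "y $ i = 0" using nonneg[of i] by simp
    then have "y $ j = 0" if "j \<in> U" for j
      using strongly_connected_on_vanishing[OF nonneg sc _ \<open>i \<in> U\<close> _ that] eig by simp
    then have "y = 0"
      using y by (auto simp: simplex_on_def vec_eq_iff)
    then show False
      using y by (simp add: simplex_on_def)
  qed
  then show ?thesis
    using y eig by (auto simp: positive_eigenvector_on_def simplex_on_def)
qed

lemma positive_eigenvector_on_perron_root:
  assumes "U \<noteq> {}" and "strongly_connected_on E U"
  obtains y where "positive_eigenvector_on E U (perron_root E U) y"
  using someI_ex[OF positive_eigenvector_on_exists[OF assms]] unfolding perron_root_def by blast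

lemma complementarity_eigenvalue_perron_root:
  assumes "U \<noteq> {}" and "strongly_connected_on E U"
  shows "complementarity_eigenvalue (adjacency_matrix E) (perron_root E U)"
  using positive_eigenvector_on_perron_root[OF assms]
    complementarity_eigenvalue_if_positive_eigenvector_on \<open>U \<noteq> {}\<close> by blast

text \<open>Scale \<open>y\<close> minimally so that \<open>t y \<ge> x\<close>. If \<open>\<mu> \<le> \<lambda>\<close>, the nonnegative vector \<open>t y - x\<close>
  satisfies the hypothesis of \<open>strongly_connected_on_vanishing\<close> and vanishes at some
  vertex of \<open>S\<close>, so it vanishes on all of \<open>U\<close>, which fails at any vertex of \<open>U - S\<close>.\<close>

lemma positive_eigenvector_on_strict_mono:
  fixes x y :: "real^'n::finite"
  assumes x: "positive_eigenvector_on E S lam x" and y: "positive_eigenvector_on E U mu y"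
    and "S \<subset> U" "S \<noteq> {}" and sc: "strongly_connected_on E U"
  shows "lam < mu"
proof (rule ccontr)
  assume "\<not> lam < mu"
  have x_pos: "\<And>i. i \<in> S \<Longrightarrow> 0 < x $ i" and x_zero: "\<And>i. i \<notin> S \<Longrightarrow> x $ i = 0"
    and x_eig: "\<And>i. i \<in> S \<Longrightarrow> (adjacency_matrix E *v x) $ i = lam * x $ i"
    using x by (auto simp: positive_eigenvector_on_def)
  have y_pos: "\<And>i. i \<in> U \<Longrightarrow> 0 < y $ i" and y_zero: "\<And>i. i \<notin> U \<Longrightarrow> y $ i = 0"
    and y_eig: "\<And>i. i \<in> U \<Longrightarrow> (adjacency_matrix E *v y) $ i = mu * y $ i"
    using y by (auto simp: positive_eigenvector_on_def)
  define t where "t = Max ((\<lambda>i. x $ i / y $ i) ` S)"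
  have "t \<in> (\<lambda>i. x $ i / y $ i) ` S"
    unfolding t_def using \<open>S \<noteq> {}\<close> by (intro Max_in) auto
  then obtain i0 where "i0 \<in> S" and t_i0: "t = x $ i0 / y $ i0" by blast
  have "i0 \<in> U" using \<open>i0 \<in> S\<close> \<open>S \<subset> U\<close> by blast
  have "0 < t"
    using t_i0 x_pos[OF \<open>i0 \<in> S\<close>] y_pos[OF \<open>i0 \<in> U\<close>] by simp
  define z where "z = t *\<^sub>R y - x"
  have z_nonneg: "0 \<le> z $ j" for j
  proof (cases "j \<in> S")
    case True
    then have "x $ j / y $ j \<le> t" unfolding t_def by (intro Max_ge) auto
    then show ?thesis
      using y_pos[of j] True \<open>S \<subset> U\<close> by (auto simp: z_def pos_divide_le_eq)
  next
    case False
    then show ?thesis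
      using x_zero y_pos y_zero \<open>0 < t\<close> by (cases "j \<in> U") (auto simp: z_def less_imp_le)
  qed
  have z_off_S: "z $ j = t * y $ j" if "j \<notin> S" for j
    using x_zero[OF that] by (simp add: z_def)
  have "(adjacency_matrix E *v z) $ i \<le> 0" if "i \<in> U" "z $ i = 0" for i
  proof -
    have "i \<in> S"
      using z_off_S[of i] that y_pos[of i] \<open>0 < t\<close> by force
    then have "x $ i = t * y $ i" using that by (simp add: z_def)
    have "(adjacency_matrix E *v z) $ i = t * (adjacency_matrix E *v y) $ i - (adjacency_matrix E *v x) $ i"
      by (simp add: z_def matrix_vector_mult_diff_distrib matrix_vector_mult_scaleR)
    also have "\<dots> = (mu - lam) * x $ i"
      using y_eig[OF \<open>i \<in> U\<close>] x_eig[OF \<open>i \<in> S\<close>] \<open>x $ i = t * y $ i\<close> by (simp add: algebra_simps)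
    also have "\<dots> \<le> 0"
      using \<open>\<not> lam < mu\<close> x_pos[OF \<open>i \<in> S\<close>] by (simp add: mult_nonpos_nonneg)
    finally show ?thesis .
  qed
  moreover have "z $ i0 = 0"
    using t_i0 y_pos[OF \<open>i0 \<in> U\<close>] by (simp add: z_def)
  moreover obtain j where "j \<in> U" "j \<notin> S" using \<open>S \<subset> U\<close> by blast
  ultimately have "z $ j = 0"
    using strongly_connected_on_vanishing[OF z_nonneg sc] \<open>i0 \<in> U\<close> by blast
  then show False
    using z_off_S[OF \<open>j \<notin> S\<close>] y_pos[OF \<open>j \<in> U\<close>] \<open>0 < t\<close> by simp
qed

lemma perron_root_strict_mono:
  assumes "S \<subset> U" "S \<noteq> {}" "strongly_connected_on E S" "strongly_connected_on E U"
  shows "perron_root E S < perron_root E U"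
proof -
  obtain x where "positive_eigenvector_on E S (perron_root E S) x"
    using positive_eigenvector_on_perron_root assms(2,3) by blast
  moreover obtain y where "positive_eigenvector_on E U (perron_root E U) y"
    using positive_eigenvector_on_perron_root assms(1,2,4) by blast
  ultimately show ?thesis
    using positive_eigenvector_on_strict_mono assms(1,2,4) by blast
qed

subsection \<open>Strongly connected vertex sets of a theta subdigraph\<close>

lemma path_arcs_map: "path_arcs (map f p) = (\<lambda>(x, y). (f x, f y)) ` path_arcs p"
  by (induction p rule: path_arcs.induct) auto

lemma path_arcs_subset: "path_arcs p \<subseteq> set p \<times> set p"
  by (induction p rule: path_arcs.induct) auto

lemma path_arcs_append: "path_arcs (xs @ y # ys) = path_arcs (xs @ [y]) \<union> path_arcs (y # ys)"
  by (induction xs rule: path_arcs.induct) auto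

lemma path_arcs_rtrancl:
  "path_arcs p \<subseteq> R \<Longrightarrow> u \<in> set p \<Longrightarrow> (hd p, u) \<in> R\<^sup>* \<and> (u, last p) \<in> R\<^sup>*"
proof (induction p arbitrary: u rule: path_arcs.induct)
  case (1 x y zs)
  then have "(x, y) \<in> R" and IH: "\<And>u. u \<in> set (y # zs) \<Longrightarrow> (y, u) \<in> R\<^sup>* \<and> (u, last (y # zs)) \<in> R\<^sup>*"
    by auto
  then show ?case
    using "1.prems"(2) IH[of y] by (auto intro: converse_rtrancl_into_rtrancl)
qed auto

lemma strongly_connected_on_closed_walk:
  assumes "p \<noteq> []" "hd p = last p" "path_arcs p \<subseteq> E"
  shows "strongly_connected_on E (set p)"
proof -
  have arcs: "path_arcs p \<subseteq> Restr E (set p)"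
    using assms(3) path_arcs_subset[of p] by blast
  show ?thesis
    unfolding strongly_connected_on_def
    using path_arcs_rtrancl[OF arcs] assms(2) by (metis rtrancl_trans)
qed

lemma strongly_connected_on_Un:
  assumes "strongly_connected_on E A" "strongly_connected_on E B" "A \<inter> B \<noteq> {}"
  shows "strongly_connected_on E (A \<union> B)"
proof -
  have mono: "(Restr E C)\<^sup>* \<subseteq> (Restr E (A \<union> B))\<^sup>*" if "C \<subseteq> A \<union> B" for C
    using that by (intro rtrancl_mono) blast
  obtain w where "w \<in> A" "w \<in> B" using assms(3) by blast
  then have "(u, w) \<in> (Restr E (A \<union> B))\<^sup>* \<and> (w, u) \<in> (Restr E (A \<union> B))\<^sup>*" if "u \<in> A \<union> B" for u
    using that assms(1,2) mono[of A] mono[of B] unfolding strongly_connected_on_def by blast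
  then show ?thesis
    unfolding strongly_connected_on_def by (meson rtrancl_trans)
qed

lemma strongly_connected_on_singleton: "strongly_connected_on E {v}"
  by (simp add: strongly_connected_on_def)

lemma strongly_connected_on_UNIV: "strongly_connected E \<Longrightarrow> strongly_connected_on E UNIV"
  by (simp add: strongly_connected_def strongly_connected_on_def)

text \<open>The cycle formed by the first and the third path of the theta subdigraph misses the
  first internal vertex \<open>a + 2\<close> of the second path, which exists because \<open>b > 0\<close>.\<close>

lemma contains_theta_nested_strongly_connected:
  assumes "contains_theta E a b c" "0 < b"
  obtains v C T where "{v} \<subset> C" "C \<subset> T" "strongly_connected_on E C"
    "strongly_connected_on E T" "card T = a + b + c + 2"
proof -
  define N where "N = a + b + c + 2"
  obtain f where inj: "inj_on f {0..<N}" and arcs: "\<forall>(x, y)\<in>theta_arcs a b c. (f x, f y) \<in> E"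
    using assms(1) unfolding contains_theta_def theta_vertices_def N_def by blast
  define vw_path where "vw_path = [a+b+2..<N] @ [1::nat]"
  define w1 where "w1 = [1] @ [2..<a+2] @ 0 # vw_path"
  define w2 where "w2 = [1] @ [a+2..<a+b+2] @ 0 # vw_path"
  have "path_arcs w \<subseteq> theta_arcs a b c" if "w \<in> {w1, w2}" for w
    using that path_arcs_append[of "[1] @ [2..<a+2]" 0 vw_path]
      path_arcs_append[of "[1] @ [a+2..<a+b+2]" 0 vw_path]
    unfolding w1_def w2_def vw_path_def theta_arcs_def N_def by (auto simp del: upt_Suc)
  then have "path_arcs (map f w) \<subseteq> E" if "w \<in> {w1, w2}" for w
    using that arcs unfolding path_arcs_map by fastforce
  moreover have "w \<noteq> [] \<and> hd w = last w" if "w \<in> {w1, w2}" for w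
    using that by (auto simp: w1_def w2_def vw_path_def simp del: upt_Suc)
  ultimately have sc: "strongly_connected_on E (f ` set w)" if "w \<in> {w1, w2}" for w
    using that strongly_connected_on_closed_walk[of "map f w" E] by (simp add: hd_map last_map)
  have sets: "set w1 = {0, 1} \<union> {2..<a+2} \<union> {a+b+2..<N}"
    "set w2 = {0, 1} \<union> {a+2..<a+b+2} \<union> {a+b+2..<N}"
    unfolding w1_def w2_def vw_path_def by (auto simp del: upt_Suc)
  have walks_cover: "set w1 \<union> set w2 = {0..<N}" and "set w1 \<subseteq> {0..<N}"
    unfolding sets N_def by auto
  define T where "T = f ` set w1 \<union> f ` set w2"
  have "card T = N"
    unfolding T_def image_Un[symmetric] walks_cover using card_image[OF inj] by simp
  moreover have "strongly_connected_on E T"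
    unfolding T_def using sc[of w1] sc[of w2] sets by (intro strongly_connected_on_Un) auto
  moreover have "{f 0} \<subset> f ` set w1"
    using sets inj_onD[OF inj, of 1 0] by (auto simp: N_def)
  moreover have "f ` set w1 \<subset> T"
  proof -
    have "a + 2 \<notin> set w1" "a + 2 \<in> set w2" "a + 2 \<in> {0..<N}"
      using sets \<open>0 < b\<close> by (auto simp: N_def)
    then have "f (a + 2) \<notin> f ` set w1"
      using inj_on_image_mem_iff[OF inj] \<open>set w1 \<subseteq> {0..<N}\<close> by blast
    then show ?thesis
      unfolding T_def using \<open>a + 2 \<in> set w2\<close> by blast
  qed
  ultimately show ?thesis
    using that sc[of w1] unfolding N_def by blast
qed

theorem mainTheorem6:
  fixes E :: "('n::finite \<times> 'n) set" and a b c :: nat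
  assumes "loopless E"
    and "strongly_connected E"
    and "card {lam. complementarity_eigenvalue (adjacency_matrix E) lam} = 3"
    and "a \<le> b" and "0 < b"
    and "contains_theta E a b c"
  shows "CARD('n) = a + b + c + 2"
proof (rule ccontr)
  assume "CARD('n) \<noteq> a + b + c + 2"
  obtain v C T where "{v} \<subset> C" "C \<subset> T" "strongly_connected_on E C"
    and "strongly_connected_on E T" "card T = a + b + c + 2"
    using contains_theta_nested_strongly_connected[OF assms(6,5)] .
  moreover from this have "T \<subset> UNIV"
    using \<open>CARD('n) \<noteq> a + b + c + 2\<close> by auto
  moreover have "strongly_connected_on E {v}" "strongly_connected_on E UNIV"
    using strongly_connected_on_singleton strongly_connected_on_UNIV[OF assms(2)] .
  ultimately have chain: "perron_root E {v} < perron_root E C" "perron_root E C < perron_root E T"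
    "perron_root E T < perron_root E UNIV"
    and eigenvalues: "{perron_root E {v}, perron_root E C, perron_root E T, perron_root E UNIV}
      \<subseteq> {lam. complementarity_eigenvalue (adjacency_matrix E) lam}"
    by (auto intro!: perron_root_strict_mono complementarity_eigenvalue_perron_root)
  have "card {perron_root E {v}, perron_root E C, perron_root E T, perron_root E UNIV} = 4"
    using chain by simp
  moreover have "finite {lam. complementarity_eigenvalue (adjacency_matrix E) lam}"
    using assms(3) by (metis card.infinite zero_neq_numeral)
  ultimately show False
    using card_mono[OF _ eigenvalues] assms(3) by simp
qed

end
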